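(* Fix $\delta\in(0,1)$, $\sigma>0$, $w\geq(2\pi)^{-1/2}$ and $u>0$ sufficiently large. There exists $c_\delta>0$ depending only on $\delta$ such that $\mathcal{M}(\rho,n,\sigma,w,u)\geq 1-\delta$ whenever $\rho\leq c\log\log(8n)$ and $c\in(0,c_\delta)$ (for any $n\geq 2$).
   Context: For a real random variable $Y$, $\|Y\|_{\Psi_2}=\inf\{t>0:\ \mathbb{E}\exp(Y^2/t^2)\leq 2\}$. Let $n\geq 2$. $\mathcal{P}(w,u)$ is the class of distributions of $X=(X_1,\ldots,X_n)^\top\in\mathbb{R}^n$ such that the $X_i$ are independent and mean zero, each $X_i/(\mathbb{E}X_i^2)^{1/2}$ has a density bounded above by $w$, and $\|X_i\|_{\Psi_2}^2\leq u\,\mathbb{E}X_i^2$ for all $i$. $\mathcal{P}_0(n,w,u,\sigma)=\{P\in\mathcal{P}(w,u):\ \mathrm{Cov}_P(X)=\sigma^2I_n\}$. For $\rho>0$, $\mathcal{P}(n,w,u,\rho)$ is the set of $P\in\mathcal{P}(w,u)$ under which $\mathrm{Cov}_P(X)=\mathrm{Diag}(V_1,\ldots,V_n)$ with, for some $t_0\in[n-1]$, $V_i=\sigma_1^2>0$ for $i\leq t_0$, $V_i=\sigma_2^2>0$ for $i>t_0$, and $\min(t_0,n-t_0)\big[\big(\frac{|\sigma_1^2-\sigma_2^2|}{\sigma_1^2\wedge\sigma_2^2}\big)\wedge\big(\frac{|\sigma_1^2-\sigma_2^2|}{\sigma_1^2\wedge\sigma_2^2}\big)^2\big]=\rho$.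 With $\Psi$ the class of measurable $\psi:\mathbb{R}^n\to\{0,1\}$, $$\mathcal{M}(\rho,n,\sigma,w,u)=\inf_{\psi\in\Psi}\Big\{\sup_{P\in\mathcal{P}_0(n,w,u,\sigma)}\mathbb{E}_P\psi(X)+\sup_{P\in\mathcal{P}(n,w,u,\rho)}\mathbb{E}_P(1-\psi(X))\Big\}.$$ *)

theory Defs
  imports "HOL-Probability.Probability"
begin

text \<open>The sample space R^n is modelled as functions nat => real on the index set {..<n}
  (coordinate i of X is  x i, for i < n; index i here corresponds to index i+1 of the paper).\<close>

abbreviation Rn_space :: "nat \<Rightarrow> (nat \<Rightarrow> real) measure" where
  "Rn_space n \<equiv> PiM {..<n} (\<lambda>_. borel)"

text \<open>Orlicz psi_2 norm, inf {t>0. E exp(Y^2/t^2) <= 2}, valued in ereal (infinite if the set is empty).\<close>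
definition psi2_norm :: "'a measure \<Rightarrow> ('a \<Rightarrow> real) \<Rightarrow> ereal" where
  "psi2_norm M Y = (INF t\<in>{t::real. t > 0 \<and> (\<integral>\<^sup>+ x. ennreal (exp ((Y x)^2 / t^2)) \<partial>M) \<le> 2}. ereal t)"

definition cov_entry :: "(nat \<Rightarrow> real) measure \<Rightarrow> nat \<Rightarrow> nat \<Rightarrow> real" where
  "cov_entry P i j = (\<integral>x. (x i - (\<integral>y. y i \<partial>P)) * (x j - (\<integral>y. y j \<partial>P)) \<partial>P)"

definition P_class :: "nat \<Rightarrow> real \<Rightarrow> real \<Rightarrow> (nat \<Rightarrow> real) measure set" where
  "P_class n w u = {P. prob_space P \<and> sets P = sets (Rn_space n) \<and>
     prob_space.indep_vars P (\<lambda>_. borel) (\<lambda>i x. x i) {..<n} \<and>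
     (\<forall>i<n. integrable P (\<lambda>x. x i) \<and> (\<integral>x. x i \<partial>P) = 0 \<and>
        (\<exists>f. distributed P lborel (\<lambda>x. x i / sqrt (\<integral>y. (y i)^2 \<partial>P)) f \<and> (\<forall>t. f t \<le> ennreal w)) \<and>
        (psi2_norm P (\<lambda>x. x i))^2 \<le> ereal (u * (\<integral>y. (y i)^2 \<partial>P)))}"

definition P0_class :: "nat \<Rightarrow> real \<Rightarrow> real \<Rightarrow> real \<Rightarrow> (nat \<Rightarrow> real) measure set" where
  "P0_class n w u \<sigma> = {P \<in> P_class n w u.
     \<forall>i<n. \<forall>j<n. cov_entry P i j = (if i = j then \<sigma>^2 else 0)}"

text \<open>Alternative class P(n,w,u,rho): one variance change point t0 in [n-1]
  (paper indices 1..t0 have variance s1 = sigma_1^2, indices > t0 have s2 = sigma_2^2).\<close>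
definition P1_class :: "nat \<Rightarrow> real \<Rightarrow> real \<Rightarrow> real \<Rightarrow> (nat \<Rightarrow> real) measure set" where
  "P1_class n w u \<rho> = {P \<in> P_class n w u. \<exists>t0::nat. \<exists>s1 s2::real.
     1 \<le> t0 \<and> t0 \<le> n - 1 \<and> s1 > 0 \<and> s2 > 0 \<and>
     (\<forall>i<n. \<forall>j<n. cov_entry P i j = (if i = j then (if i < t0 then s1 else s2) else 0)) \<and>
     (let r = \<bar>s1 - s2\<bar> / min s1 s2 in real (min t0 (n - t0)) * min r (r^2) = \<rho>)}"

definition tests :: "nat \<Rightarrow> ((nat \<Rightarrow> real) \<Rightarrow> real) set" where
  "tests n = {\<psi>. \<psi> \<in> borel_measurable (Rn_space n) \<and> (\<forall>x. \<psi> x \<in> {0, 1})}"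

definition minimax_risk :: "real \<Rightarrow> nat \<Rightarrow> real \<Rightarrow> real \<Rightarrow> real \<Rightarrow> ennreal" where
  "minimax_risk \<rho> n \<sigma> w u =
     (INF \<psi>\<in>tests n.
        (SUP P\<in>P0_class n w u \<sigma>. \<integral>\<^sup>+ x. ennreal (\<psi> x) \<partial>P)
      + (SUP P\<in>P1_class n w u \<rho>. \<integral>\<^sup>+ x. ennreal (1 - \<psi> x) \<partial>P))"

end

theory Submission
  imports Defs
begin

(* Le Cam's method with a uniform mixture of alternatives.  Under the null all coordinates are
   uniform on [-a, a] with a = sigma sqrt 3.  An alternative multiplies the density of the first
   t coordinates by 1 + r h, where h = -1 on [-a/2, a/2] and h = 1 elsewhere; this keeps the mean
   zero, the density and the support bounded, and raises the variance by the factor 1 + 3r/4.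
   Because h has mean zero and h^2 = 1 under the null, the likelihood ratios of two such
   alternatives satisfy E_0 [L_k L_j] = (1 + r_k r_j)^min(t_k, t_j), so the chi-square divergence
   of the mixture is explicit.  With y = ln ln (8 n), about e^(y/4) / delta^2 change points
   t_k = T m^(2k) (m about y / delta^2) still fit below n/2; the diagonal terms are at most
   exp(16 rho / 9) <= e^(y/4) and the off-diagonal ones at most exp(delta^2 / 4), so the divergence
   is at most delta^2 and every test has risk at least 1 - delta.  When y is small, rho itself is
   small and a single alternative suffices. *)

section \<open>A perturbed uniform distribution\<close>

definition outer_sign :: "real \<Rightarrow> real \<Rightarrow> real" where
  "outer_sign a x = (if \<bar>x\<bar> \<le> a/2 then -1 else 1)"

definition step_density :: "real \<Rightarrow> real \<Rightarrow> real \<Rightarrow> real" where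
  "step_density a r x = indicator {-a..a} x / (2*a) * (1 + r * outer_sign a x)"

definition step_distr :: "real \<Rightarrow> real \<Rightarrow> real measure" where
  "step_distr a r = density lborel (\<lambda>x. ennreal (step_density a r x))"

lemma outer_sign_mult_self [simp]: "outer_sign a x * outer_sign a x = 1"
  by (simp add: outer_sign_def)

lemma abs_outer_sign [simp]: "\<bar>outer_sign a x\<bar> = 1"
  by (simp add: outer_sign_def)

lemma borel_measurable_outer_sign [measurable]: "outer_sign a \<in> borel_measurable borel"
  unfolding outer_sign_def by measurable

lemma borel_measurable_step_density [measurable]: "step_density a r \<in> borel_measurable borel"
  unfolding step_density_def by measurable

lemma one_plus_outer_sign_nonneg: "\<bar>r\<bar> \<le> 1 \<Longrightarrow> 0 \<le> 1 + r * outer_sign a x"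
  using abs_mult[of r "outer_sign a x"] by (auto simp: abs_le_iff)

lemma step_density_eq_indicators:
  assumes "a > 0"
  shows "step_density a r x =
    ((1 + r) * indicator {-a..a} x - 2 * r * indicator {-(a/2)..a/2} x) / (2*a)"
  using assms by (auto simp: step_density_def outer_sign_def indicator_def field_simps abs_le_iff)

lemma step_density_nonneg: "a > 0 \<Longrightarrow> \<bar>r\<bar> \<le> 1 \<Longrightarrow> 0 \<le> step_density a r x"
  unfolding step_density_def by (simp add: one_plus_outer_sign_nonneg)

lemma step_density_le: "a > 0 \<Longrightarrow> step_density a r x \<le> (1 + \<bar>r\<bar>) / (2*a)"
  using abs_ge_self[of "r * outer_sign a x"]
  by (auto simp: step_density_def indicator_def divide_simps abs_mult)

lemma step_density_outside: "a < \<bar>x\<bar> \<Longrightarrow> step_density a r x = 0"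
  by (auto simp: step_density_def indicator_def)

lemma step_density_factor: "step_density a r x = step_density a 0 x * (1 + r * outer_sign a x)"
  by (simp add: step_density_def)

lemma step_density_mult_outer_sign:
  "step_density a 0 x * outer_sign a x = step_density a 1 x - step_density a 0 x"
  by (simp add: step_density_def algebra_simps add_divide_distrib)

lemma
  assumes "a > 0"
  shows integrable_power_step_density: "integrable lborel (\<lambda>x. x^k * step_density a r x)"
    and integral_power_step_density: "(\<integral>x. x^k * step_density a r x \<partial>lborel) =
      (1+r) / (2*a) * ((a^Suc k - (-a)^Suc k) / Suc k)
      - 2*r / (2*a) * (((a/2)^Suc k - (-(a/2))^Suc k) / Suc k)"
proof -
  have power_indicator_integrable: "integrable lborel (\<lambda>x. x^k * indicator {-b..b} x :: real)" for b
    by (auto intro!: borel_integrable_atLeastAtMost)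
  have power_indicator_integral:
    "(\<integral>x. x^k * indicator {-b..b} x \<partial>lborel) = (b^Suc k - (-b)^Suc k) / Suc k" if "b \<ge> 0" for b :: real
    by (rule integral_power) (use that in simp)
  have eq: "(\<lambda>x. x^k * step_density a r x) = (\<lambda>x. (1+r) / (2*a) * (x^k * indicator {-a..a} x)
       - 2*r / (2*a) * (x^k * indicator {-(a/2)..a/2} x))"
    using assms by (auto simp: step_density_eq_indicators field_simps)
  show "integrable lborel (\<lambda>x. x^k * step_density a r x)"
    unfolding eq using power_indicator_integrable by auto
  show "(\<integral>x. x^k * step_density a r x \<partial>lborel) =
      (1+r) / (2*a) * ((a^Suc k - (-a)^Suc k) / Suc k)
      - 2*r / (2*a) * (((a/2)^Suc k - (-(a/2))^Suc k) / Suc k)"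
    unfolding eq using power_indicator_integrable power_indicator_integral[of a]
      power_indicator_integral[of "a/2"] assms
    by (simp add: mult.commute del: of_nat_Suc)
qed

lemma integrable_step_density: "a > 0 \<Longrightarrow> integrable lborel (step_density a r)"
  using integrable_power_step_density[of a 0 r] by simp

lemma integral_step_density: "a > 0 \<Longrightarrow> (\<integral>x. step_density a r x \<partial>lborel) = 1"
  using integral_power_step_density[of a 0 r] by (simp add: field_simps)

lemma integral_mult_step_density: "a > 0 \<Longrightarrow> (\<integral>x. x * step_density a r x \<partial>lborel) = 0"
  using integral_power_step_density[of a 1 r] by (simp add: field_simps)

lemma integral_square_step_density:
  assumes "a > 0"
  shows "(\<integral>x. x^2 * step_density a r x \<partial>lborel) = a^2 * (1/3 + r/4)"
proof -
  have "(\<integral>x. x^2 * step_density a r x \<partial>lborel) * a = (a^2 * (1/3 + r/4)) * a"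
    using integral_power_step_density[of a 2 r] assms
    by (simp add: field_simps power3_eq_cube power2_eq_square)
  then show ?thesis using assms by simp
qed

lemma sets_step_distr [simp, measurable_cong]: "sets (step_distr a r) = sets borel"
  by (simp add: step_distr_def)

lemma space_step_distr [simp]: "space (step_distr a r) = UNIV"
  by (simp add: step_distr_def)

lemma borel_measurable_step_distr:
  "f \<in> borel_measurable borel \<Longrightarrow> f \<in> borel_measurable (step_distr a r)"
  by (subst measurable_cong_sets[OF sets_step_distr refl])

lemma prob_space_step_distr:
  assumes "a > 0" "\<bar>r\<bar> \<le> 1"
  shows "prob_space (step_distr a r)"
proof
  have "emeasure (step_distr a r) (space (step_distr a r)) = (\<integral>\<^sup>+x. ennreal (step_density a r x) \<partial>lborel)"
    by (simp add: step_distr_def emeasure_density)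
  also have "\<dots> = ennreal (\<integral>x. step_density a r x \<partial>lborel)"
    using assms by (intro nn_integral_eq_integral integrable_step_density) (auto simp: step_density_nonneg)
  also have "\<dots> = 1" using assms by (simp add: integral_step_density)
  finally show "emeasure (step_distr a r) (space (step_distr a r)) = 1" .
qed

lemma integral_step_distr:
  assumes "a > 0" "\<bar>r\<bar> \<le> 1" "f \<in> borel_measurable borel"
  shows "(\<integral>x. f x \<partial>step_distr a r) = (\<integral>x. step_density a r x * f x \<partial>lborel)"
  unfolding step_distr_def using assms by (subst integral_density) (auto simp: step_density_nonneg)

lemma integrable_step_distr_iff:
  assumes "a > 0" "\<bar>r\<bar> \<le> 1" "f \<in> borel_measurable borel"
  shows "integrable (step_distr a r) f \<longleftrightarrow> integrable lborel (\<lambda>x. step_density a r x * f x)"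
  unfolding step_distr_def using assms by (subst integrable_density) (auto simp: step_density_nonneg)

lemma integrable_step_distr_id: "a > 0 \<Longrightarrow> \<bar>r\<bar> \<le> 1 \<Longrightarrow> integrable (step_distr a r) (\<lambda>x. x)"
  using integrable_power_step_density[of a 1 r] by (subst integrable_step_distr_iff) (auto simp: mult.commute)

lemma integral_step_distr_id: "a > 0 \<Longrightarrow> \<bar>r\<bar> \<le> 1 \<Longrightarrow> (\<integral>x. x \<partial>step_distr a r) = 0"
  by (subst integral_step_distr) (auto simp: integral_mult_step_density mult.commute)

lemma integral_step_distr_square:
  "a > 0 \<Longrightarrow> \<bar>r\<bar> \<le> 1 \<Longrightarrow> (\<integral>x. x^2 \<partial>step_distr a r) = a^2 * (1/3 + r/4)"
  using integral_square_step_density[of a r] by (subst integral_step_distr) (auto simp: mult.commute)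

lemma integral_step_distr_perturbation_product:
  assumes "a > 0"
  shows "(\<integral>x. (1 + \<alpha> * outer_sign a x) * (1 + \<beta> * outer_sign a x) \<partial>step_distr a 0) = 1 + \<alpha> * \<beta>"
proof -
  have "step_density a 0 x * ((1 + \<alpha> * outer_sign a x) * (1 + \<beta> * outer_sign a x)) =
     (1 + \<alpha>*\<beta> - (\<alpha>+\<beta>)) * step_density a 0 x + (\<alpha>+\<beta>) * step_density a 1 x" for x
  proof -
    have "step_density a 0 x * ((1 + \<alpha> * outer_sign a x) * (1 + \<beta> * outer_sign a x)) =
       step_density a 0 x * (1 + \<alpha>*\<beta> * (outer_sign a x * outer_sign a x))
       + (\<alpha>+\<beta>) * (step_density a 0 x * outer_sign a x)"
      by (simp add: algebra_simps)
    then show ?thesis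
      by (simp only: outer_sign_mult_self step_density_mult_outer_sign) (simp add: algebra_simps)
  qed
  then show ?thesis
    using assms by (subst integral_step_distr) (auto simp: integrable_step_density integral_step_density)
qed

lemma integrable_step_distr_perturbation_product:
  assumes "a > 0"
  shows "integrable (step_distr a 0) (\<lambda>x. (1 + \<alpha> * outer_sign a x) * (1 + \<beta> * outer_sign a x))"
proof -
  interpret prob_space "step_distr a 0" using assms by (simp add: prob_space_step_distr)
  have "\<bar>1 + \<gamma> * outer_sign a x\<bar> \<le> 1 + \<bar>\<gamma>\<bar>" for \<gamma> x
    using abs_triangle_ineq[of 1 "\<gamma> * outer_sign a x"] by (simp add: abs_mult)
  then have "\<bar>(1 + \<alpha> * outer_sign a x) * (1 + \<beta> * outer_sign a x)\<bar> \<le> (1 + \<bar>\<alpha>\<bar>) * (1 + \<bar>\<beta>\<bar>)" for x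
    by (simp add: abs_mult mult_mono')
  then show ?thesis
    by (intro integrable_const_bound[where B="(1 + \<bar>\<alpha>\<bar>) * (1 + \<bar>\<beta>\<bar>)"]) auto
qed

lemma step_distr_eq_density:
  assumes "a > 0" "\<bar>r\<bar> \<le> 1"
  shows "step_distr a r = density (step_distr a 0) (\<lambda>x. ennreal (1 + r * outer_sign a x))"
proof -
  have "density (step_distr a 0) (\<lambda>x. ennreal (1 + r * outer_sign a x)) =
        density lborel (\<lambda>x. ennreal (step_density a 0 x) * ennreal (1 + r * outer_sign a x))"
    unfolding step_distr_def by (subst density_density_eq) auto
  also have "\<dots> = step_distr a r"
    unfolding step_distr_def using assms
    by (intro density_cong)
       (auto simp: ennreal_mult'[symmetric] step_density_nonneg one_plus_outer_sign_nonneg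
         step_density_factor[of a r])
  finally show ?thesis by simp
qed

lemma distr_step_distr_divide:
  assumes "a > 0" "\<bar>r\<bar> \<le> 1" "c > 0"
  shows "distr (step_distr a r) lborel (\<lambda>y. y / c) = density lborel (\<lambda>y. ennreal (c * step_density a r (c*y)))"
proof (rule measure_eqI)
  fix A assume "A \<in> sets (distr (step_distr a r) lborel (\<lambda>y. y / c))"
  then have A[measurable]: "A \<in> sets borel" by simp
  have "emeasure (distr (step_distr a r) lborel (\<lambda>y. y / c)) A
      = emeasure (step_distr a r) ((\<lambda>y. y / c) -` A \<inter> space (step_distr a r))"
    by (rule emeasure_distr) (auto intro: borel_measurable_step_distr)
  also have "\<dots> = (\<integral>\<^sup>+x. ennreal (step_density a r x) * indicator A (x / c) \<partial>lborel)"
  proof -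
    have "(\<lambda>y. y / c) -` A \<in> sets borel"
      using measurable_sets[OF _ A, of "\<lambda>y. y / c" borel] by simp
    then show ?thesis
      unfolding step_distr_def by (subst emeasure_density) (auto simp: indicator_def)
  qed
  also have "\<dots> = ennreal c * (\<integral>\<^sup>+y. ennreal (step_density a r (0 + c * y)) * indicator A ((0 + c * y) / c) \<partial>lborel)"
    using assms by (subst nn_integral_real_affine[where c=c and t=0]) auto
  also have "\<dots> = (\<integral>\<^sup>+y. ennreal (c * step_density a r (c*y)) * indicator A y \<partial>lborel)"
    using assms by (subst nn_integral_cmult[symmetric]) (auto intro!: nn_integral_cong simp: ennreal_mult' mult.assoc)
  also have "\<dots> = emeasure (density lborel (\<lambda>y. ennreal (c * step_density a r (c*y)))) A"
    by (subst emeasure_density) auto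
  finally show "emeasure (distr (step_distr a r) lborel (\<lambda>y. y / c)) A
      = emeasure (density lborel (\<lambda>y. ennreal (c * step_density a r (c*y)))) A" .
qed simp

lemma step_peak_le_gaussian_peak:
  fixes r :: real
  assumes "0 \<le> r" "r \<le> 1/12"
  shows "sqrt (1/3 + r/4) * (1 + r) / 2 \<le> 1 / sqrt (2 * pi)"
proof -
  have "sqrt (1/3 + r/4) * (1 + r) / 2 = sqrt ((1/3 + r/4) * (1 + r)^2 / 4)"
    using assms by (simp add: real_sqrt_mult real_sqrt_divide)
  also have "\<dots> \<le> sqrt (1 / (2 * pi))"
  proof (intro real_sqrt_le_mono)
    have "(1 + r)^2 \<le> (13/12)^2" using assms by (intro power_mono) auto
    then have "(1/3 + r/4) * (1 + r)^2 \<le> 17/48 * (13/12)^2" using assms by (intro mult_mono) auto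
    also have "\<dots> < 2 / 4" by (simp add: power2_eq_square)
    also have "\<dots> < 2 / pi" using pi_less_4 pi_gt3 by (intro divide_strict_left_mono) auto
    finally show "(1/3 + r/4) * (1 + r)^2 / 4 \<le> 1 / (2 * pi)" using pi_gt3 by (simp add: field_simps)
  qed
  also have "\<dots> = 1 / sqrt (2 * pi)" by (simp add: real_sqrt_divide)
  finally show ?thesis .
qed

section \<open>Product models and their likelihood ratios\<close>

definition step_product :: "nat \<Rightarrow> real \<Rightarrow> (nat \<Rightarrow> real) \<Rightarrow> (nat \<Rightarrow> real) measure" where
  "step_product n a r = PiM {..<n} (\<lambda>i. step_distr a (r i))"

definition likelihood_ratio :: "nat \<Rightarrow> real \<Rightarrow> (nat \<Rightarrow> real) \<Rightarrow> (nat \<Rightarrow> real) \<Rightarrow> real" where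
  "likelihood_ratio n a r x = (\<Prod>i<n. 1 + r i * outer_sign a (x i))"

lemma sets_step_product [measurable_cong]: "sets (step_product n a r) = sets (Rn_space n)"
  unfolding step_product_def by (intro sets_PiM_cong) auto

lemma space_step_product: "space (step_product n a r) = space (Rn_space n)"
  unfolding step_product_def by (simp add: space_PiM)

lemma prob_space_step_product:
  assumes "a > 0" "\<And>i. \<bar>r i\<bar> \<le> 1"
  shows "prob_space (step_product n a r)"
  unfolding step_product_def using assms by (intro prob_space_PiM) (auto simp: prob_space_step_distr)

lemma borel_measurable_likelihood_ratio [measurable]:
  "likelihood_ratio n a r \<in> borel_measurable (Rn_space n)"
  unfolding likelihood_ratio_def by measurable

lemma likelihood_ratio_nonneg: "(\<And>i. \<bar>r i\<bar> \<le> 1) \<Longrightarrow> 0 \<le> likelihood_ratio n a r x"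
  unfolding likelihood_ratio_def by (intro prod_nonneg) (simp add: one_plus_outer_sign_nonneg)

lemma likelihood_ratio_le: "(\<And>i. \<bar>r i\<bar> \<le> 1) \<Longrightarrow> likelihood_ratio n a r x \<le> 2^n"
proof -
  assume r: "\<And>i. \<bar>r i\<bar> \<le> 1"
  have "1 + r i * outer_sign a (x i) \<le> 2" for i
    using r[of i] abs_ge_self[of "r i * outer_sign a (x i)"] by (simp add: abs_mult)
  then have "likelihood_ratio n a r x \<le> (\<Prod>i<n. 2)"
    unfolding likelihood_ratio_def using r by (intro prod_mono) (auto simp: one_plus_outer_sign_nonneg)
  then show ?thesis by simp
qed

lemma indicator_PiE_eq_prod:
  assumes "x \<in> extensional I" "finite I"
  shows "indicator (Pi\<^sub>E I A) x = (\<Prod>i\<in>I. indicator (A i) (x i) :: ennreal)"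
proof (cases "x \<in> Pi\<^sub>E I A")
  case True then show ?thesis by (auto simp: indicator_def PiE_iff)
next
  case False
  then obtain i where "i \<in> I" "x i \<notin> A i" using assms by (auto simp: PiE_iff)
  then have "(\<Prod>i\<in>I. indicator (A i) (x i) :: ennreal) = 0"
    using assms(2) by (intro prod_zero) (auto simp: indicator_def)
  then show ?thesis using False by simp
qed

lemma step_product_eq_density:
  assumes a: "a > 0" and r: "\<And>i. \<bar>r i\<bar> \<le> 1"
  shows "step_product n a r = density (step_product n a (\<lambda>_. 0)) (\<lambda>x. ennreal (likelihood_ratio n a r x))"
proof -
  let ?Q0 = "step_product n a (\<lambda>_. 0)"
  interpret P: product_sigma_finite "\<lambda>i. step_distr a (r i)"
    unfolding product_sigma_finite_def using assms
    by (auto intro!: prob_space_imp_sigma_finite prob_space_step_distr)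
  interpret P0: product_sigma_finite "\<lambda>i. step_distr a 0"
    unfolding product_sigma_finite_def using assms
    by (auto intro!: prob_space_imp_sigma_finite prob_space_step_distr)
  have "density ?Q0 (\<lambda>x. ennreal (likelihood_ratio n a r x)) = PiM {..<n} (\<lambda>i. step_distr a (r i))"
  proof (rule P.PiM_eqI)
    show "sets (density ?Q0 (\<lambda>x. ennreal (likelihood_ratio n a r x))) = sets (PiM {..<n} (\<lambda>i. step_distr a (r i)))"
      unfolding sets_density step_product_def by (intro sets_PiM_cong) auto
  next
    fix A assume "\<And>i. i \<in> {..<n} \<Longrightarrow> A i \<in> sets (step_distr a (r i))"
    then have A: "A i \<in> sets borel" if "i < n" for i using that by simp
    have "emeasure (density ?Q0 (\<lambda>x. ennreal (likelihood_ratio n a r x))) (Pi\<^sub>E {..<n} A)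
       = (\<integral>\<^sup>+x. ennreal (likelihood_ratio n a r x) * indicator (Pi\<^sub>E {..<n} A) x \<partial>?Q0)"
      using A by (subst emeasure_density) (auto simp: step_product_def intro!: sets_PiM_I_finite)
    also have "\<dots> = (\<integral>\<^sup>+x. (\<Prod>i<n. ennreal (1 + r i * outer_sign a (x i)) * indicator (A i) (x i)) \<partial>?Q0)"
    proof (intro nn_integral_cong)
      fix x assume "x \<in> space ?Q0"
      then have ext: "x \<in> extensional {..<n}" by (auto simp: space_step_product space_PiM PiE_def)
      show "ennreal (likelihood_ratio n a r x) * indicator (Pi\<^sub>E {..<n} A) x =
         (\<Prod>i<n. ennreal (1 + r i * outer_sign a (x i)) * indicator (A i) (x i))"
        unfolding likelihood_ratio_def indicator_PiE_eq_prod[OF ext finite_lessThan] prod.distrib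
        using r by (simp add: prod_ennreal one_plus_outer_sign_nonneg)
    qed
    also have "\<dots> = (\<Prod>i<n. \<integral>\<^sup>+y. ennreal (1 + r i * outer_sign a y) * indicator (A i) y \<partial>step_distr a 0)"
      unfolding step_product_def using A by (intro P0.product_nn_integral_prod) auto
    also have "\<dots> = (\<Prod>i<n. emeasure (step_distr a (r i)) (A i))"
      using A step_distr_eq_density[OF a r] by (intro prod.cong refl) (simp add: emeasure_density)
    finally show "emeasure (density ?Q0 (\<lambda>x. ennreal (likelihood_ratio n a r x))) (Pi\<^sub>E {..<n} A)
      = (\<Prod>i<n. emeasure (step_distr a (r i)) (A i))" .
  qed simp
  then show ?thesis by (simp add: step_product_def)
qed

lemma integral_likelihood_ratio_mult:
  assumes "a > 0"
  shows "(\<integral>x. likelihood_ratio n a r x * likelihood_ratio n a s x \<partial>step_product n a (\<lambda>_. 0))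
      = (\<Prod>i<n. 1 + r i * s i)"
proof -
  interpret P0: product_sigma_finite "\<lambda>i. step_distr a 0"
    unfolding product_sigma_finite_def using assms
    by (auto intro!: prob_space_imp_sigma_finite prob_space_step_distr)
  have eq: "(\<lambda>x. likelihood_ratio n a r x * likelihood_ratio n a s x) =
      (\<lambda>x. \<Prod>i<n. (\<lambda>i y. (1 + r i * outer_sign a y) * (1 + s i * outer_sign a y)) i (x i))"
    by (simp add: likelihood_ratio_def prod.distrib)
  show ?thesis
    unfolding eq step_product_def using assms
    by (subst P0.product_integral_prod)
       (auto simp: integral_step_distr_perturbation_product integrable_step_distr_perturbation_product)
qed

locale step_product_model =
  fixes n :: nat and a :: real and r :: "nat \<Rightarrow> real"
  assumes a_pos: "a > 0" and abs_r_le_1: "\<And>i. \<bar>r i\<bar> \<le> 1"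
begin

abbreviation "Q \<equiv> step_product n a r"

lemma prob_space_Q: "prob_space Q"
  using a_pos abs_r_le_1 by (rule prob_space_step_product)

lemma measurable_component: "i < n \<Longrightarrow> (\<lambda>x. x i) \<in> measurable Q (step_distr a (r i))"
  unfolding step_product_def by (rule measurable_component_singleton) simp

lemma borel_measurable_component: "i < n \<Longrightarrow> (\<lambda>x. x i) \<in> borel_measurable Q"
  using measurable_component by (simp add: measurable_cong_sets[OF refl sets_step_distr])

lemma distr_component: "i < n \<Longrightarrow> distr Q (step_distr a (r i)) (\<lambda>x. x i) = step_distr a (r i)"
  unfolding step_product_def using a_pos abs_r_le_1
  by (intro distr_PiM_component) (auto simp: prob_space_step_distr)

lemma integral_component:
  fixes f :: "real \<Rightarrow> real"
  assumes "i < n" "f \<in> borel_measurable borel"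
  shows "(\<integral>x. f (x i) \<partial>Q) = (\<integral>y. f y \<partial>step_distr a (r i))"
  using integral_distr[OF measurable_component borel_measurable_step_distr, of i f] assms
  by (simp add: distr_component)

lemma integrable_component:
  fixes f :: "real \<Rightarrow> real"
  assumes "i < n" "f \<in> borel_measurable borel" "integrable (step_distr a (r i)) f"
  shows "integrable Q (\<lambda>x. f (x i))"
  using integrable_distr_eq[OF measurable_component borel_measurable_step_distr, of i f] assms
  by (simp add: distr_component)

lemma nn_integral_component:
  assumes "i < n" "f \<in> borel_measurable borel"
  shows "(\<integral>\<^sup>+x. f (x i) \<partial>Q) = (\<integral>\<^sup>+y. f y \<partial>step_distr a (r i))"
  using nn_integral_distr[OF measurable_component, of i f] assms
  by (simp add: distr_component measurable_cong_sets[OF sets_step_distr refl])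

lemma integrable_component_id: "i < n \<Longrightarrow> integrable Q (\<lambda>x. x i)"
  by (rule integrable_component[where f="\<lambda>x. x", OF _ _ integrable_step_distr_id[OF a_pos abs_r_le_1]])
    simp_all

lemma integral_component_id: "i < n \<Longrightarrow> (\<integral>x. x i \<partial>Q) = 0"
  using integral_component[of i "\<lambda>x. x"] integral_step_distr_id a_pos abs_r_le_1 by simp

lemma integral_component_square: "i < n \<Longrightarrow> (\<integral>x. (x i)^2 \<partial>Q) = a^2 * (1/3 + r i / 4)"
  using integral_component[of i "\<lambda>x. x^2"] integral_step_distr_square a_pos abs_r_le_1 by simp

lemma indep_components: "n > 0 \<Longrightarrow> prob_space.indep_vars Q (\<lambda>_. borel) (\<lambda>i x. x i) {..<n}"
proof -
  assume n: "n > 0"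
  interpret prob_space Q by (rule prob_space_Q)
  show ?thesis
  proof (subst indep_vars_iff_distr_eq_PiM')
    show "{..<n} \<noteq> {}" using n by auto
    show "random_variable borel (\<lambda>x. x i)" if "i \<in> {..<n}" for i
      using borel_measurable_component that by simp
    have "distr Q (Pi\<^sub>M {..<n} (\<lambda>i. borel)) (\<lambda>x. restrict x {..<n}) = distr Q Q (\<lambda>x. x)"
      by (intro distr_cong) (auto simp: sets_step_product space_step_product space_PiM)
    also have "\<dots> = Q" by (simp add: distr_id2)
    also have "\<dots> = Pi\<^sub>M {..<n} (\<lambda>i. distr Q borel (\<lambda>x. x i))"
      unfolding step_product_def
    proof (intro PiM_cong refl)
      fix i assume i: "i \<in> {..<n}"
      then have "distr Q borel (\<lambda>x. x i) = distr Q (step_distr a (r i)) (\<lambda>x. x i)"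
        by (intro distr_cong) auto
      then show "step_distr a (r i) = distr (Pi\<^sub>M {..<n} (\<lambda>i. step_distr a (r i))) borel (\<lambda>x. x i)"
        using distr_component[of i] i by (simp add: step_product_def)
    qed
    finally show "distr Q (Pi\<^sub>M {..<n} (\<lambda>i. borel)) (\<lambda>x. restrict x {..<n}) =
      Pi\<^sub>M {..<n} (\<lambda>i. distr Q borel (\<lambda>x. x i))" .
  qed
qed

lemma cov_entry_eq:
  assumes "n > 0" "i < n" "j < n"
  shows "cov_entry Q i j = (if i = j then a^2 * (1/3 + r i / 4) else 0)"
proof -
  interpret prob_space Q by (rule prob_space_Q)
  have "cov_entry Q i j = (\<integral>x. x i * x j \<partial>Q)"
    unfolding cov_entry_def using assms by (simp add: integral_component_id)
  also have "\<dots> = (if i = j then a^2 * (1/3 + r i / 4) else 0)"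
  proof (cases "i = j")
    case True then show ?thesis using integral_component_square[of i] assms by (simp add: power2_eq_square)
  next
    case False
    have "indep_vars (\<lambda>_. borel) (\<lambda>i x. x i) {i, j}"
      using assms by (intro indep_vars_subset[OF indep_components]) auto
    then have "(\<integral>x. (\<Prod>k\<in>{i,j}. x k) \<partial>Q) = (\<Prod>k\<in>{i,j}. \<integral>x. x k \<partial>Q)"
      using assms by (intro indep_vars_lebesgue_integral) (auto intro: integrable_component_id)
    then show ?thesis using False assms by (simp add: integral_component_id)
  qed
  finally show ?thesis .
qed

lemma distributed_component_divide:
  assumes "i < n" "c > 0"
  shows "distributed Q lborel (\<lambda>x. x i / c) (\<lambda>y. ennreal (c * step_density a (r i) (c*y)))"
proof -
  have "(\<lambda>y. y / c) \<in> measurable (step_distr a (r i)) lborel"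
    by (simp add: measurable_cong_sets[OF sets_step_distr refl])
  then have "distr Q lborel (\<lambda>x. x i / c) = distr (distr Q (step_distr a (r i)) (\<lambda>x. x i)) lborel (\<lambda>y. y / c)"
    using assms by (subst distr_distr[OF _ measurable_component]) (simp_all add: comp_def)
  also have "\<dots> = density lborel (\<lambda>y. ennreal (c * step_density a (r i) (c*y)))"
    using assms a_pos abs_r_le_1 by (simp add: distr_component distr_step_distr_divide)
  moreover have "(\<lambda>x. x i / c) \<in> borel_measurable Q"
    using borel_measurable_component[OF assms(1)] by (rule borel_measurable_divide) simp
  moreover have "(\<lambda>y. ennreal (c * step_density a (r i) (c*y))) \<in> borel_measurable borel"
    by measurable
  ultimately show ?thesis unfolding distributed_def by simp
qed

lemma psi2_norm_component_le: "i < n \<Longrightarrow> psi2_norm Q (\<lambda>x. x i) \<le> ereal (a / sqrt (ln 2))"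
proof -
  assume i: "i < n"
  define t where "t = a / sqrt (ln 2)"
  have t: "t > 0" "t^2 = a^2 / ln 2" using a_pos by (simp_all add: t_def power_divide)
  have bound: "ennreal (step_density a (r i) y) * ennreal (exp (y^2 / t^2)) \<le> ennreal (step_density a (r i) y) * 2" for y
  proof (cases "\<bar>y\<bar> \<le> a")
    case True
    have "\<bar>y\<bar>^2 \<le> a^2" using True by (intro power_mono) auto
    then have "y^2 / t^2 \<le> ln 2" unfolding t(2) using a_pos by (simp add: field_simps mult_left_mono)
    then have "exp (y^2 / t^2) \<le> 2"
      by (metis exp_le_cancel_iff exp_ln zero_less_numeral)
    then show ?thesis by (intro mult_left_mono) (auto simp: ennreal_le_iff[symmetric])
  qed (simp add: step_density_outside)
  have "(\<integral>\<^sup>+x. ennreal (exp ((x i)^2 / t^2)) \<partial>Q) = (\<integral>\<^sup>+y. ennreal (exp (y^2 / t^2)) \<partial>step_distr a (r i))"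
    by (rule nn_integral_component[OF i]) simp
  also have "\<dots> = (\<integral>\<^sup>+y. ennreal (step_density a (r i) y) * ennreal (exp (y^2 / t^2)) \<partial>lborel)"
    unfolding step_distr_def by (subst nn_integral_density) auto
  also have "\<dots> \<le> (\<integral>\<^sup>+y. ennreal (step_density a (r i) y) * 2 \<partial>lborel)"
    by (intro nn_integral_mono bound)
  also have "\<dots> = 2 * (\<integral>\<^sup>+y. ennreal (step_density a (r i) y) \<partial>lborel)"
    by (subst nn_integral_multc) (auto simp: mult.commute)
  also have "(\<integral>\<^sup>+y. ennreal (step_density a (r i) y) \<partial>lborel) = 1"
    using prob_space.emeasure_space_1[OF prob_space_step_distr[OF a_pos abs_r_le_1]]
    by (simp add: step_distr_def emeasure_density)
  finally have "(\<integral>\<^sup>+x. ennreal (exp ((x i)^2 / t^2)) \<partial>Q) \<le> 2" by simp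
  then show ?thesis
    unfolding psi2_norm_def t_def[symmetric] using t by (intro INF_lower2[of t]) auto
qed

lemma psi2_norm_component_square_le: "i < n \<Longrightarrow> (psi2_norm Q (\<lambda>x. x i))^2 \<le> ereal (a^2 / ln 2)"
proof -
  assume i: "i < n"
  have "0 \<le> psi2_norm Q (\<lambda>x. x i)"
    unfolding psi2_norm_def by (rule INF_greatest) auto
  moreover note psi2_norm_component_le[OF i]
  ultimately obtain v where "psi2_norm Q (\<lambda>x. x i) = ereal v" "0 \<le> v" "v \<le> a / sqrt (ln 2)"
    by (cases "psi2_norm Q (\<lambda>x. x i)") auto
  moreover have "v^2 \<le> a^2 / ln 2" if "0 \<le> v" "v \<le> a / sqrt (ln 2)" for v
    using power_mono[OF that(2,1), of 2] by (simp add: power_divide)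
  ultimately show ?thesis by auto
qed

lemma standardized_component_density_le:
  assumes i: "i < n" and r: "0 \<le> r i" "r i \<le> 1/12" and w: "w \<ge> 1 / sqrt (2 * pi)"
  shows "\<exists>f. distributed Q lborel (\<lambda>x. x i / sqrt (\<integral>y. (y i)^2 \<partial>Q)) f \<and> (\<forall>t. f t \<le> ennreal w)"
proof (intro exI conjI allI)
  define c where "c = sqrt (\<integral>y. (y i)^2 \<partial>Q)"
  have c: "c = a * sqrt (1/3 + r i / 4)" "c > 0"
    using a_pos r by (simp_all add: c_def integral_component_square[OF i] real_sqrt_mult)
  show "distributed Q lborel (\<lambda>x. x i / sqrt (\<integral>y. (y i)^2 \<partial>Q)) (\<lambda>y. ennreal (c * step_density a (r i) (c*y)))"
    using distributed_component_divide[OF i c(2)] unfolding c_def .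
  fix t
  have "c * step_density a (r i) (c*t) \<le> c * ((1 + \<bar>r i\<bar>) / (2*a))"
    using c a_pos by (intro mult_left_mono step_density_le) auto
  also have "\<dots> = sqrt (1/3 + r i / 4) * (1 + r i) / 2" using c r a_pos by simp
  finally show "ennreal (c * step_density a (r i) (c*t)) \<le> ennreal w"
    using step_peak_le_gaussian_peak[OF r] w by (intro ennreal_leI) linarith
qed

lemma psi2_norm_component_square_le_moment:
  assumes i: "i < n" and r: "0 \<le> r i" and u: "u \<ge> 3 / ln 2"
  shows "(psi2_norm Q (\<lambda>x. x i))^2 \<le> ereal (u * (\<integral>y. (y i)^2 \<partial>Q))"
proof -
  have "a^2 / ln 2 = (3 / ln 2) * (a^2 * (1/3))" by simp
  also have "\<dots> \<le> u * (a^2 * (1/3 + r i / 4))"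
    using u a_pos r order_trans[OF _ u, of 0] by (intro mult_mono) auto
  finally have "ereal (a^2 / ln 2) \<le> ereal (u * (\<integral>y. (y i)^2 \<partial>Q))"
    by (simp add: integral_component_square[OF i])
  with psi2_norm_component_square_le[OF i] show ?thesis by (rule order_trans)
qed

lemma step_product_in_P_class:
  assumes n: "n > 0" and r: "\<And>i. 0 \<le> r i \<and> r i \<le> 1/12"
    and w: "w \<ge> 1 / sqrt (2 * pi)" and u: "u \<ge> 3 / ln 2"
  shows "Q \<in> P_class n w u"
  unfolding P_class_def
proof (intro CollectI conjI allI impI)
  show "prob_space Q" by (rule prob_space_Q)
  show "sets Q = sets (Rn_space n)" by (rule sets_step_product)
  show "prob_space.indep_vars Q (\<lambda>_. borel) (\<lambda>i x. x i) {..<n}" by (rule indep_components[OF n])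
  fix i assume i: "i < n"
  show "integrable Q (\<lambda>x. x i)" by (rule integrable_component_id[OF i])
  show "(\<integral>x. x i \<partial>Q) = 0" by (rule integral_component_id[OF i])
  show "\<exists>f. distributed Q lborel (\<lambda>x. x i / sqrt (\<integral>y. (y i)^2 \<partial>Q)) f \<and> (\<forall>t. f t \<le> ennreal w)"
    using r[of i] w by (intro standardized_component_density_le[OF i]) auto
  show "(psi2_norm Q (\<lambda>x. x i))^2 \<le> ereal (u * (\<integral>y. (y i)^2 \<partial>Q))"
    using r[of i] u by (intro psi2_norm_component_square_le_moment[OF i]) auto
qed

end

section \<open>Le Cam's bound for a mixture of alternatives\<close>

lemma exists_ge_average:
  fixes f :: "nat \<Rightarrow> real"
  assumes "K > 0"
  shows "\<exists>k<K. (\<Sum>j<K. f j) / K \<le> f k"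
proof (rule ccontr)
  assume "\<not> ?thesis"
  then have "(\<Sum>k<K. f k) < (\<Sum>k<K. (\<Sum>j<K. f j) / K)"
    using assms by (intro sum_strict_mono) auto
  then show False using assms by simp
qed

lemma test_error_pointwise_bound:
  fixes p y e :: real
  assumes "p \<in> {0,1}" "e > 0" "0 \<le> y"
  shows "1 - e/2 - (1 - y)^2 / (2*e) \<le> p + (1 - p) * y"
proof -
  have square_nonneg: "0 \<le> (1 - y)^2 / (2*e)" using assms by simp
  have "0 \<le> ((1 - y) - e)^2 / (2*e)" using assms by simp
  also have "((1 - y) - e)^2 / (2*e) = (1 - y)^2 / (2*e) - (1 - y) + e/2"
    using assms by (simp add: field_simps power2_eq_square)
  finally have le_y: "1 - e/2 - (1 - y)^2 / (2*e) \<le> y" by simp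
  from assms(1) consider "p = 0" | "p = 1" by blast
  then show ?thesis
  proof cases
    case 1 then show ?thesis using le_y by simp
  next
    case 2
    have "1 - e/2 - (1 - y)^2 / (2*e) \<le> 1" using square_nonneg assms(2) by linarith
    with 2 show ?thesis by simp
  qed
qed

locale likelihood_ratio_family = prob_space Q0 for Q0 :: "'a measure" +
  fixes K :: nat and L :: "nat \<Rightarrow> 'a \<Rightarrow> real" and B :: real
  assumes K_pos: "K > 0"
    and L_meas [measurable]: "\<And>k. k < K \<Longrightarrow> L k \<in> borel_measurable Q0"
    and L_nonneg: "\<And>k x. k < K \<Longrightarrow> 0 \<le> L k x"
    and L_le: "\<And>k x. k < K \<Longrightarrow> L k x \<le> B"
    and L_integral: "\<And>k. k < K \<Longrightarrow> (\<integral>x. L k x \<partial>Q0) = 1"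
begin

definition mixture :: "'a \<Rightarrow> real" where
  "mixture x = (\<Sum>k<K. L k x) / K"

definition chi2_divergence :: real where
  "chi2_divergence = (\<Sum>k<K. \<Sum>j<K. \<integral>x. L k x * L j x \<partial>Q0) / K^2 - 1"

lemma B_nonneg: "0 \<le> B"
  using L_nonneg[of 0 undefined] L_le[of 0 undefined] K_pos by force

lemma integrable_L: "k < K \<Longrightarrow> integrable Q0 (L k)"
  using L_nonneg L_le by (intro integrable_const_bound[where B=B]) auto

lemma integrable_L_mult: "k < K \<Longrightarrow> j < K \<Longrightarrow> integrable Q0 (\<lambda>x. L k x * L j x)"
  using L_nonneg L_le B_nonneg
  by (intro integrable_const_bound[where B="B*B"]) (auto simp: abs_mult intro!: mult_mono)

lemma mixture_nonneg: "0 \<le> mixture x"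
  unfolding mixture_def by (intro divide_nonneg_nonneg sum_nonneg) (auto intro: L_nonneg)

lemma integrable_mixture: "integrable Q0 mixture"
  unfolding mixture_def using integrable_L
  by (intro integrable_divide Bochner_Integration.integrable_sum) auto

lemma integral_mixture: "(\<integral>x. mixture x \<partial>Q0) = 1"
  unfolding mixture_def using integrable_L L_integral K_pos by (simp add: integral_sum)

lemma
  shows integrable_mixture_square: "integrable Q0 (\<lambda>x. (mixture x)^2)"
    and integral_mixture_square: "(\<integral>x. (mixture x)^2 \<partial>Q0) = chi2_divergence + 1"
proof -
  have int_row: "integrable Q0 (\<lambda>x. \<Sum>j<K. L k x * L j x)" if "k < K" for k
    by (rule Bochner_Integration.integrable_sum) (use that integrable_L_mult in simp)
  have square: "(mixture x)^2 = (\<Sum>k<K. \<Sum>j<K. L k x * L j x) / K^2" for x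
    unfolding mixture_def by (simp add: power2_eq_square sum_product power_divide)
  show "integrable Q0 (\<lambda>x. (mixture x)^2)"
    unfolding square by (rule integrable_divide_zero, rule Bochner_Integration.integrable_sum)
      (use int_row in simp)
  show "(\<integral>x. (mixture x)^2 \<partial>Q0) = chi2_divergence + 1"
    unfolding square chi2_divergence_def using integrable_L_mult int_row by (simp add: integral_sum')
qed

text \<open>Type I error plus average type II error against the chi-square divergence; the choice
  e = sqrt(chi^2) would give Le Cam's bound 1 - sqrt(chi^2).\<close>
lemma test_error_bound:
  assumes \<psi>_meas [measurable]: "\<psi> \<in> borel_measurable Q0" and \<psi>: "\<And>x. \<psi> x \<in> {0,1}" and e: "e > 0"
  shows "1 - e/2 - chi2_divergence / (2*e)
     \<le> (\<integral>x. \<psi> x \<partial>Q0) + (\<Sum>k<K. \<integral>x. L k x * (1 - \<psi> x) \<partial>Q0) / K"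
proof -
  have int_\<psi>: "integrable Q0 \<psi>"
  proof (rule integrable_const_bound[where B=1])
    have "norm (\<psi> x) \<le> 1" for x using \<psi>[of x] by auto
    then show "AE x in Q0. norm (\<psi> x) \<le> 1" by simp
  qed simp
  have int_L\<psi>: "integrable Q0 (\<lambda>x. L k x * (1 - \<psi> x))" if "k < K" for k
  proof (rule integrable_const_bound[where B=B])
    have "norm (L k x * (1 - \<psi> x)) \<le> B" for x
      using \<psi>[of x] L_nonneg[OF that, of x] L_le[OF that, of x] by auto
    then show "AE x in Q0. norm (L k x * (1 - \<psi> x)) \<le> B" by simp
  qed (use that in simp)
  have int_L\<psi>_sum: "integrable Q0 (\<lambda>x. \<Sum>k<K. L k x * (1 - \<psi> x))"
    by (rule Bochner_Integration.integrable_sum) (use int_L\<psi> in simp)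
  have lhs: "(\<lambda>x. 1 - e/2 - (1 - mixture x)^2 / (2*e))
      = (\<lambda>x. (1 - e/2 - 1/(2*e)) + (1/e) * mixture x - (1/(2*e)) * (mixture x)^2)"
    using e by (auto simp: field_simps power2_eq_square)
  have rhs: "(\<lambda>x. \<psi> x + (1 - \<psi> x) * mixture x) = (\<lambda>x. \<psi> x + (\<Sum>k<K. L k x * (1 - \<psi> x)) / K)"
    unfolding mixture_def sum_distrib_right[symmetric] by (simp add: mult.commute)
  have "1 - e/2 - chi2_divergence / (2*e) = (\<integral>x. 1 - e/2 - (1 - mixture x)^2 / (2*e) \<partial>Q0)"
    unfolding lhs using integrable_mixture integrable_mixture_square e
    by (simp add: integral_mixture integral_mixture_square prob_space field_simps)
  also have "\<dots> \<le> (\<integral>x. \<psi> x + (1 - \<psi> x) * mixture x \<partial>Q0)"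
  proof (rule integral_mono)
    show "integrable Q0 (\<lambda>x. 1 - e/2 - (1 - mixture x)^2 / (2*e))"
      unfolding lhs using integrable_mixture integrable_mixture_square by auto
    show "integrable Q0 (\<lambda>x. \<psi> x + (1 - \<psi> x) * mixture x)"
      unfolding rhs using int_\<psi> int_L\<psi>_sum by simp
    show "1 - e/2 - (1 - mixture x)^2 / (2*e) \<le> \<psi> x + (1 - \<psi> x) * mixture x" for x
      by (rule test_error_pointwise_bound[OF \<psi> e mixture_nonneg])
  qed
  also have "\<dots> = (\<integral>x. \<psi> x \<partial>Q0) + (\<Sum>k<K. \<integral>x. L k x * (1 - \<psi> x) \<partial>Q0) / K"
    unfolding rhs using int_\<psi> int_L\<psi>_sum int_L\<psi> by (simp add: integral_sum')
  finally show ?thesis .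
qed

lemma test_risk_ge:
  assumes \<psi>_meas [measurable]: "\<psi> \<in> borel_measurable Q0" and \<psi>: "\<And>x. \<psi> x \<in> {0,1}"
    and \<delta>: "\<delta> > 0" and chi2: "chi2_divergence \<le> \<delta>^2"
  shows "\<exists>k<K. ennreal (1 - \<delta>)
    \<le> (\<integral>\<^sup>+x. ennreal (\<psi> x) \<partial>Q0) + (\<integral>\<^sup>+x. ennreal (1 - \<psi> x) \<partial>density Q0 (\<lambda>x. ennreal (L k x)))"
proof -
  have \<psi>_bounds: "0 \<le> \<psi> x" "\<psi> x \<le> 1" for x using \<psi>[of x] by auto
  have "chi2_divergence / (2*\<delta>) \<le> \<delta>^2 / (2*\<delta>)"
    using chi2 \<delta> by (intro divide_right_mono) auto
  also have "\<delta>^2 / (2*\<delta>) = \<delta>/2" using \<delta> by (simp add: power2_eq_square)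
  finally have "1 - \<delta> \<le> (\<integral>x. \<psi> x \<partial>Q0) + (\<Sum>k<K. \<integral>x. L k x * (1 - \<psi> x) \<partial>Q0) / K"
    using test_error_bound[OF \<psi>_meas \<psi> \<delta>] by linarith
  then obtain k where k: "k < K"
    and k_bound: "1 - \<delta> \<le> (\<integral>x. \<psi> x \<partial>Q0) + (\<integral>x. L k x * (1 - \<psi> x) \<partial>Q0)"
    using exists_ge_average[OF K_pos, of "\<lambda>k. \<integral>x. L k x * (1 - \<psi> x) \<partial>Q0"] by force
  have L\<psi>_bounds: "0 \<le> L k x * (1 - \<psi> x)" "L k x * (1 - \<psi> x) \<le> B" for x
    using L_nonneg[OF k, of x] L_le[OF k, of x] \<psi>_bounds[of x] mult_left_mono[of "1 - \<psi> x" 1 "L k x"]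
    by auto
  have type_I: "(\<integral>\<^sup>+x. ennreal (\<psi> x) \<partial>Q0) = ennreal (\<integral>x. \<psi> x \<partial>Q0)"
    using \<psi>_bounds by (intro nn_integral_eq_integral integrable_const_bound[where B=1]) auto
  have "(\<integral>\<^sup>+x. ennreal (1 - \<psi> x) \<partial>density Q0 (\<lambda>x. ennreal (L k x)))
      = (\<integral>\<^sup>+x. ennreal (L k x * (1 - \<psi> x)) \<partial>Q0)"
    using k L_nonneg[OF k] by (subst nn_integral_density) (auto simp: ennreal_mult')
  also have "\<dots> = ennreal (\<integral>x. L k x * (1 - \<psi> x) \<partial>Q0)"
    using k L\<psi>_bounds by (intro nn_integral_eq_integral integrable_const_bound[where B=B]) auto
  finally have type_II: "(\<integral>\<^sup>+x. ennreal (1 - \<psi> x) \<partial>density Q0 (\<lambda>x. ennreal (L k x)))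
      = ennreal (\<integral>x. L k x * (1 - \<psi> x) \<partial>Q0)" .
  have "ennreal (1 - \<delta>) \<le> ennreal ((\<integral>x. \<psi> x \<partial>Q0) + (\<integral>x. L k x * (1 - \<psi> x) \<partial>Q0))"
    using k_bound by (rule ennreal_leI)
  also have "\<dots> = (\<integral>\<^sup>+x. ennreal (\<psi> x) \<partial>Q0)
      + (\<integral>\<^sup>+x. ennreal (1 - \<psi> x) \<partial>density Q0 (\<lambda>x. ennreal (L k x)))"
    unfolding type_I type_II using \<psi>_bounds L\<psi>_bounds by (simp add: ennreal_plus)
  finally show ?thesis using k by blast
qed

end

lemma minimax_risk_ge_mixture:
  assumes family: "likelihood_ratio_family Q0 K L B"
    and Q0: "Q0 \<in> P0_class n w u \<sigma>"
    and alternatives: "\<And>k. k < K \<Longrightarrow> density Q0 (\<lambda>x. ennreal (L k x)) \<in> P1_class n w u \<rho>"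
    and \<delta>: "\<delta> > 0"
    and chi2: "(\<Sum>k<K. \<Sum>j<K. \<integral>x. L k x * L j x \<partial>Q0) / K^2 - 1 \<le> \<delta>^2"
  shows "ennreal (1 - \<delta>) \<le> minimax_risk \<rho> n \<sigma> w u"
  unfolding minimax_risk_def
proof (rule INF_greatest)
  interpret likelihood_ratio_family Q0 K L B by (rule family)
  fix \<psi> assume "\<psi> \<in> tests n"
  then have \<psi>_meas: "\<psi> \<in> borel_measurable (Rn_space n)" and \<psi>: "\<And>x. \<psi> x \<in> {0,1}"
    by (auto simp: tests_def)
  have sets_Q0: "sets Q0 = sets (Rn_space n)" using Q0 by (simp add: P0_class_def P_class_def)
  have \<psi>_Q0: "\<psi> \<in> borel_measurable Q0"
    using \<psi>_meas by (subst measurable_cong_sets[OF sets_Q0 refl])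
  have "chi2_divergence \<le> \<delta>^2" using chi2 by (simp add: chi2_divergence_def)
  then obtain k where k: "k < K" and "ennreal (1 - \<delta>)
    \<le> (\<integral>\<^sup>+x. ennreal (\<psi> x) \<partial>Q0) + (\<integral>\<^sup>+x. ennreal (1 - \<psi> x) \<partial>density Q0 (\<lambda>x. ennreal (L k x)))"
    using test_risk_ge[OF \<psi>_Q0 \<psi> \<delta>] by blast
  note this(2)
  also have "\<dots> \<le> (SUP P\<in>P0_class n w u \<sigma>. \<integral>\<^sup>+ x. ennreal (\<psi> x) \<partial>P)
      + (SUP P\<in>P1_class n w u \<rho>. \<integral>\<^sup>+ x. ennreal (1 - \<psi> x) \<partial>P)"
    using Q0 alternatives[OF k] by (intro add_mono SUP_upper)
  finally show "ennreal (1 - \<delta>) \<le> (SUP P\<in>P0_class n w u \<sigma>. \<integral>\<^sup>+ x. ennreal (\<psi> x) \<partial>P)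
      + (SUP P\<in>P1_class n w u \<rho>. \<integral>\<^sup>+ x. ennreal (1 - \<psi> x) \<partial>P)" .
qed

lemma likelihood_ratio_family_step_product:
  assumes a: "a > 0" and K: "K > 0" and r: "\<And>k i. k < K \<Longrightarrow> \<bar>r k i\<bar> \<le> 1"
  shows "likelihood_ratio_family (step_product n a (\<lambda>_. 0)) K (\<lambda>k. likelihood_ratio n a (r k)) (2^n)"
proof (intro likelihood_ratio_family.intro likelihood_ratio_family_axioms.intro)
  show "prob_space (step_product n a (\<lambda>_. 0))" using a by (rule prob_space_step_product) simp
  show "likelihood_ratio n a (r k) \<in> borel_measurable (step_product n a (\<lambda>_. 0))" for k
    by (simp add: measurable_cong_sets[OF sets_step_product refl])
  show "0 \<le> likelihood_ratio n a (r k) x" if "k < K" for k x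
    by (rule likelihood_ratio_nonneg) (rule r[OF that])
  show "likelihood_ratio n a (r k) x \<le> 2^n" if "k < K" for k x
    by (rule likelihood_ratio_le) (rule r[OF that])
  show "(\<integral>x. likelihood_ratio n a (r k) x \<partial>step_product n a (\<lambda>_. 0)) = 1" for k
    using integral_likelihood_ratio_mult[OF a, of n "r k" "\<lambda>_. 0"] by (simp add: likelihood_ratio_def)
qed (rule K)

section \<open>Change-point alternatives\<close>

text \<open>The second moment of the step distribution is a^2 (1/3 + r/4), so with a^2 = 3 sigma^2
  the jump size r raises the variance by the factor 1 + q with q = sqrt(rho / t); a change of
  relative size q after t coordinates has signal strength t q^2 = rho in the sense of P1_class.\<close>
definition jump_size :: "real \<Rightarrow> nat \<Rightarrow> real" where
  "jump_size \<rho> t = 4/3 * sqrt (\<rho> / t)"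

definition change_point_profile :: "real \<Rightarrow> nat \<Rightarrow> nat \<Rightarrow> real" where
  "change_point_profile \<rho> t i = (if i < t then jump_size \<rho> t else 0)"

definition change_point_chi2 :: "real \<Rightarrow> nat \<Rightarrow> (nat \<Rightarrow> nat) \<Rightarrow> real" where
  "change_point_chi2 \<rho> K t =
    (\<Sum>k<K. \<Sum>j<K. (1 + jump_size \<rho> (t k) * jump_size \<rho> (t j)) ^ min (t k) (t j)) / K^2 - 1"

lemma jump_size_bounds:
  assumes "\<rho> > 0" "256 * \<rho> \<le> t"
  shows "0 \<le> jump_size \<rho> t" "jump_size \<rho> t \<le> 1/12"
proof -
  have "\<rho> / t \<le> 1/256" using assms by (simp add: field_simps)
  then have "sqrt (\<rho> / t) \<le> sqrt (1/256)" by (rule real_sqrt_le_mono)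
  also have "sqrt (1/256) = (1/16::real)" by (simp add: real_sqrt_divide)
  finally show "0 \<le> jump_size \<rho> t" "jump_size \<rho> t \<le> 1/12"
    using assms by (auto simp: jump_size_def)
qed

lemma prod_change_point_profiles:
  assumes "s \<le> n" "t \<le> n"
  shows "(\<Prod>i<n. 1 + change_point_profile \<rho> s i * change_point_profile \<rho> t i)
    = (1 + jump_size \<rho> s * jump_size \<rho> t) ^ min s t"
proof -
  have "(\<Prod>i<n. 1 + change_point_profile \<rho> s i * change_point_profile \<rho> t i)
      = (\<Prod>i<n. if i < min s t then 1 + jump_size \<rho> s * jump_size \<rho> t else 1)"
    by (intro prod.cong) (auto simp: change_point_profile_def)
  also have "\<dots> = (\<Prod>i\<in>{..<n} \<inter> {i. i < min s t}. 1 + jump_size \<rho> s * jump_size \<rho> t)"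
    by (subst prod.If_cases) auto
  also have "{..<n} \<inter> {i. i < min s t} = {..<min s t}" using assms by auto
  finally show ?thesis by simp
qed

lemma step_product_null_in_P0_class:
  assumes "\<sigma> > 0" "n > 0" "w \<ge> 1 / sqrt (2 * pi)" "u \<ge> 3 / ln 2"
  shows "step_product n (\<sigma> * sqrt 3) (\<lambda>_. 0) \<in> P0_class n w u \<sigma>"
proof -
  interpret step_product_model n "\<sigma> * sqrt 3" "\<lambda>_. 0"
    using assms by unfold_locales auto
  show ?thesis
    using assms step_product_in_P_class cov_entry_eq by (simp add: P0_class_def power_mult_distrib)
qed

lemma step_product_change_point_in_P1_class:
  fixes \<rho> :: real
  assumes \<sigma>: "\<sigma> > 0" and w: "w \<ge> 1 / sqrt (2 * pi)" and u: "u \<ge> 3 / ln 2"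
    and \<rho>: "\<rho> > 0" and t: "1 \<le> t" "2 * t \<le> n" "256 * \<rho> \<le> t"
  shows "step_product n (\<sigma> * sqrt 3) (change_point_profile \<rho> t) \<in> P1_class n w u \<rho>"
proof -
  let ?r = "jump_size \<rho> t"
  have r: "0 \<le> ?r" "?r \<le> 1/12" using jump_size_bounds[of \<rho> t] \<rho> t by auto
  interpret step_product_model n "\<sigma> * sqrt 3" "change_point_profile \<rho> t"
    using \<sigma> r by unfold_locales (auto simp: change_point_profile_def)
  define q where "q = sqrt (\<rho> / t)"
  have "4/3 * q \<le> 1/12" using r(2) unfolding jump_size_def q_def[symmetric] .
  moreover have "0 \<le> q" using \<rho> by (simp add: q_def)
  ultimately have q: "0 \<le> q" "q \<le> 1" by linarith+
  define s1 where "s1 = \<sigma>^2 * (1 + q)"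
  have s1: "\<sigma>^2 \<le> s1" "0 < s1" using \<sigma> q by (auto simp: s1_def add_pos_nonneg)
  have ratio: "\<bar>s1 - \<sigma>^2\<bar> / min s1 (\<sigma>^2) = q"
    using s1 \<sigma> by (simp add: s1_def min_def field_simps)
  have "min q (q^2) = q^2" using q by (simp add: power2_eq_square mult_left_le min_absorb2)
  moreover have "real (min t (n - t)) * q^2 = \<rho>" using \<rho> t by (simp add: q_def)
  moreover have "cov_entry Q i j = (if i = j then (if i < t then s1 else \<sigma>^2) else 0)"
    if "i < n" "j < n" for i j
    using cov_entry_eq[OF _ that] t
    by (auto simp: change_point_profile_def jump_size_def q_def s1_def field_simps power_mult_distrib)
  ultimately show ?thesis
    using step_product_in_P_class[OF _ _ w u] r \<sigma> s1 t ratio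
    unfolding P1_class_def Let_def
    by (intro CollectI conjI exI[of _ t] exI[of _ s1] exI[of _ "\<sigma>^2"])
       (auto simp: change_point_profile_def)
qed

lemma minimax_risk_ge_change_point_mixture:
  fixes \<rho> :: real and t :: "nat \<Rightarrow> nat"
  assumes \<sigma>: "\<sigma> > 0" and w: "w \<ge> 1 / sqrt (2 * pi)" and u: "u \<ge> 3 / ln 2"
    and \<rho>: "\<rho> > 0" and \<delta>: "\<delta> > 0" and K: "K > 0"
    and "\<forall>k<K. 1 \<le> t k \<and> 2 * t k \<le> n \<and> 256 * \<rho> \<le> t k"
    and chi2: "change_point_chi2 \<rho> K t \<le> \<delta>^2"
  shows "ennreal (1 - \<delta>) \<le> minimax_risk \<rho> n \<sigma> w u"
proof -
  have t: "1 \<le> t k \<and> 2 * t k \<le> n \<and> 256 * \<rho> \<le> t k" if "k < K" for k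
    using assms(7) that by blast
  define a where "a = \<sigma> * sqrt 3"
  define r where "r k = change_point_profile \<rho> (t k)" for k
  let ?Q0 = "step_product n a (\<lambda>_. 0)"
  have a: "a > 0" using \<sigma> by (simp add: a_def)
  have n: "n > 0" using t[OF K] by linarith
  have r: "\<bar>r k i\<bar> \<le> 1" if "k < K" for k i
    using jump_size_bounds[of \<rho> "t k"] \<rho> t[OF that] by (auto simp: r_def change_point_profile_def)
  have "(\<integral>x. likelihood_ratio n a (r k) x * likelihood_ratio n a (r j) x \<partial>?Q0)
      = (1 + jump_size \<rho> (t k) * jump_size \<rho> (t j)) ^ min (t k) (t j)" if "k < K" "j < K" for k j
    using t[OF that(1)] t[OF that(2)] a
    by (simp add: integral_likelihood_ratio_mult r_def prod_change_point_profiles)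
  then have chi2_L: "(\<Sum>k<K. \<Sum>j<K. \<integral>x. likelihood_ratio n a (r k) x * likelihood_ratio n a (r j) x \<partial>?Q0)
      / K^2 - 1 \<le> \<delta>^2"
    using chi2 by (simp add: change_point_chi2_def)
  have family: "likelihood_ratio_family ?Q0 K (\<lambda>k. likelihood_ratio n a (r k)) (2^n)"
    by (rule likelihood_ratio_family_step_product[OF a K]) (rule r)
  have alternatives: "density ?Q0 (\<lambda>x. ennreal (likelihood_ratio n a (r k) x)) \<in> P1_class n w u \<rho>"
    if "k < K" for k
  proof -
    have "step_product n a (r k) = density ?Q0 (\<lambda>x. ennreal (likelihood_ratio n a (r k) x))"
      using a r[OF that] by (intro step_product_eq_density) auto
    moreover have "step_product n a (r k) \<in> P1_class n w u \<rho>"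
      unfolding a_def r_def using step_product_change_point_in_P1_class[OF \<sigma> w u \<rho>] t[OF that] by auto
    ultimately show ?thesis by simp
  qed
  have null: "?Q0 \<in> P0_class n w u \<sigma>"
    unfolding a_def by (rule step_product_null_in_P0_class[OF \<sigma> n w u])
  show ?thesis
    by (rule minimax_risk_ge_mixture[OF family null _ \<delta> chi2_L]) (rule alternatives)
qed

section \<open>Choice of the change points\<close>

lemma one_plus_power_le_exp:
  fixes x :: real
  assumes "-1 \<le> x"
  shows "(1 + x)^m \<le> exp (m * x)"
proof -
  have "(1 + x)^m \<le> (exp x)^m" using assms by (intro power_mono) auto
  also have "\<dots> = exp (m * x)" by (simp add: exp_of_nat_mult)
  finally show ?thesis .
qed

lemma average_double_sum_le:
  fixes f :: "nat \<Rightarrow> nat \<Rightarrow> real"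
  assumes K: "K > 0" and B: "0 \<le> B"
    and diag: "\<And>k. k < K \<Longrightarrow> f k k \<le> D"
    and offdiag: "\<And>k j. k < K \<Longrightarrow> j < K \<Longrightarrow> k \<noteq> j \<Longrightarrow> f k j \<le> B"
  shows "(\<Sum>k<K. \<Sum>j<K. f k j) / K^2 \<le> D / K + B"
proof -
  have row: "(\<Sum>j<K. if j = k then D else B) = D + (real K - 1) * B" if "k < K" for k
  proof -
    have "(\<Sum>j<K. if j = k then D else B) = (\<Sum>j\<in>{..<K} \<inter> {k}. D) + (\<Sum>j\<in>{..<K} - {k}. B)"
      by (subst sum.If_cases) (auto simp: Diff_eq)
    then show ?thesis using that by (simp add: Int_absorb1 of_nat_diff)
  qed
  have "(\<Sum>k<K. \<Sum>j<K. f k j) \<le> (\<Sum>k<K. \<Sum>j<K. if j = k then D else B)"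
    using diag offdiag by (intro sum_mono) auto
  also have "\<dots> = K * (D + (real K - 1) * B)" using row by simp
  also have "\<dots> \<le> K * D + K^2 * B" using B by (simp add: algebra_simps power2_eq_square)
  finally show ?thesis using K by (simp add: field_simps power2_eq_square)
qed

lemma jump_size_square: "0 < t \<Longrightarrow> 0 \<le> \<rho> \<Longrightarrow> real t * (jump_size \<rho> t * jump_size \<rho> t) = 16/9 * \<rho>"
  by (simp add: jump_size_def)

lemma change_point_chi2_le:
  assumes K: "K > 0" and \<rho>: "\<rho> > 0" and \<delta>: "0 < \<delta>" "\<delta> \<le> 1" and t: "\<And>k. k < K \<Longrightarrow> t k > 0"
    and diag: "exp (16/9 * \<rho>) \<le> K * \<delta>^2 / 2"
    and offdiag: "\<And>k j. k < K \<Longrightarrow> j < K \<Longrightarrow> k \<noteq> j \<Longrightarrow>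
      real (min (t k) (t j)) * (jump_size \<rho> (t k) * jump_size \<rho> (t j)) \<le> \<delta>^2 / 4"
  shows "change_point_chi2 \<rho> K t \<le> \<delta>^2"
proof -
  define f where "f k j = (1 + jump_size \<rho> (t k) * jump_size \<rho> (t j)) ^ min (t k) (t j)" for k j
  have f_le_exp: "f k j \<le> exp (real (min (t k) (t j)) * (jump_size \<rho> (t k) * jump_size \<rho> (t j)))" for k j
  proof -
    have "0 \<le> jump_size \<rho> (t k) * jump_size \<rho> (t j)" using \<rho> by (simp add: jump_size_def)
    then show ?thesis unfolding f_def by (rule one_plus_power_le_exp[OF order_trans, rotated]) simp
  qed
  have "f k k \<le> K * \<delta>^2 / 2" if "k < K" for k
    using f_le_exp[of k k] jump_size_square[OF t[OF that], of \<rho>] \<rho> diag by simp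
  moreover have "f k j \<le> exp (\<delta>^2 / 4)" if "k < K" "j < K" "k \<noteq> j" for k j
    by (rule order_trans[OF f_le_exp]) (use offdiag[OF that] in simp)
  ultimately have "(\<Sum>k<K. \<Sum>j<K. f k j) / K^2 \<le> K * \<delta>^2 / 2 / K + exp (\<delta>^2 / 4)"
    using K by (intro average_double_sum_le) auto
  moreover have "K * \<delta>^2 / 2 / K = \<delta>^2 / 2" using K by simp
  moreover have "exp (\<delta>^2 / 4) \<le> 1 + 2 * (\<delta>^2 / 4)"
    using \<delta> power_le_one[of \<delta> 2] by (intro real_exp_bound_lemma) auto
  ultimately show ?thesis unfolding change_point_chi2_def f_def by linarith
qed

lemma jump_size_cross_le:
  fixes m :: real
  assumes s: "0 < s" and st: "real s * m^2 \<le> real t" and m: "m > 0" and \<rho>: "\<rho> \<ge> 0"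
  shows "real s * (jump_size \<rho> s * jump_size \<rho> t) \<le> 16/9 * (\<rho> / m)"
proof -
  have "(real s * m)^2 = real s * (real s * m^2)" by (simp add: power2_eq_square)
  also have "\<dots> \<le> real s * real t" using st s by (intro mult_left_mono) auto
  finally have sm: "real s * m \<le> sqrt (real s * real t)" by (rule real_le_rsqrt)
  have "real s * (jump_size \<rho> s * jump_size \<rho> t) = 16/9 * (real s * (\<rho> / sqrt (real s * real t)))"
    using \<rho> by (simp add: jump_size_def real_sqrt_mult[symmetric] real_sqrt_divide)
  also have "\<dots> \<le> 16/9 * (real s * (\<rho> / (real s * m)))"
  proof -
    have "0 < real s * m" using s m by simp
    moreover have "0 < sqrt (real s * real t)" using calculation sm by linarith
    ultimately have "0 < sqrt (real s * real t) * (real s * m)" by simp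
    then show ?thesis using s \<rho> sm by (intro mult_left_mono divide_left_mono) auto
  qed
  also have "\<dots> = 16/9 * (\<rho> / m)" using s by simp
  finally show ?thesis .
qed

lemma single_change_point_exists:
  assumes "n \<ge> 2" "0 < \<rho>" "\<rho> \<le> \<delta>^2 / 2" "\<rho> \<le> 1/256"
  shows "\<exists>K t. 0 < K \<and> (\<forall>k<K. 1 \<le> t k \<and> 2 * t k \<le> n \<and> 256 * \<rho> \<le> t k) \<and> change_point_chi2 \<rho> K t \<le> \<delta>^2"
proof (intro exI[of _ 1] exI[of _ "\<lambda>_. 1"] conjI allI impI)
  have "jump_size \<rho> 1 * jump_size \<rho> 1 = 16/9 * \<rho>" using jump_size_square[of 1 \<rho>] assms by simp
  then show "change_point_chi2 \<rho> 1 (\<lambda>_. 1) \<le> \<delta>^2" using assms by (simp add: change_point_chi2_def)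
qed (use assms in auto)

lemma of_nat_nat_ceiling_le: "0 \<le> x \<Longrightarrow> real (nat \<lceil>x\<rceil>) \<le> x + 1"
  using ceiling_correct[of x] by linarith

lemma geometric_change_points_fit:
  fixes T m K n :: nat
  assumes \<delta>: "0 < \<delta>" "\<delta> < 1" and y: "y > 0" and n: "exp y = ln (8 * real n)" "n > 0"
    and y_large: "144 / \<delta>^4 + 15 \<le> exp (y/2)"
    and T: "0 < T" "real T \<le> 32 * y + 1" and m: "0 < m" "real m \<le> y / \<delta>^2 + 1"
    and K: "0 < K" "real K \<le> 2 * exp (y/4) / \<delta>^2 + 1"
  shows "2 * (T * m^(2*(K-1))) \<le> n"
proof -
  define M where "M = 1 / \<delta>^4"
  define E where "E = exp (y/2)"
  have "\<delta>^4 \<le> 1" "0 < \<delta>^4" using \<delta> by (simp_all add: power_le_one)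
  then have M: "M \<ge> 1" by (simp add: M_def)
  have E: "144 * M + 15 \<le> E" "exp y = E * E" "exp (y/4) * exp (y/4) = E"
    using y_large by (simp_all add: M_def E_def exp_add[symmetric])
  have y_le: "y \<le> 4 * exp (y/4)" using exp_ge_add_one_self[of "y/4"] by linarith
  have "ln (real (2 * (T * m^(2*(K-1))))) = ln 2 + ln (real T) + real (2*(K-1)) * ln (real m)"
    using T m by (simp add: ln_mult ln_realpow)
  also have "\<dots> \<le> 1 + 32 * y + (2 * (2 * exp (y/4) / \<delta>^2)) * (y / \<delta>^2)"
  proof -
    have "ln 2 \<le> (1::real)" using ln_le_minus_one[of 2] by simp
    moreover have "ln (real T) \<le> 32 * y" using ln_le_minus_one[of "real T"] T by simp
    moreover have "real (2*(K-1)) * ln (real m) \<le> (2 * (2 * exp (y/4) / \<delta>^2)) * (y / \<delta>^2)"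
      using K m ln_le_minus_one[of "real m"] by (intro mult_mono) (auto simp: of_nat_diff)
    ultimately show ?thesis by linarith
  qed
  also have "(2 * (2 * exp (y/4) / \<delta>^2)) * (y / \<delta>^2) = 4 * M * y * exp (y/4)"
    by (simp add: M_def field_simps power4_eq_xxxx power2_eq_square)
  also have "1 + 32 * y + 4 * M * y * exp (y/4) \<le> 1 + 36 * M * y * exp (y/4)"
    using y M mult_mono[OF M one_le_exp_iff[THEN iffD2], of "y/4"] by (simp add: algebra_simps)
  also have "\<dots> \<le> 1 + 144 * M * E"
    using y_le M E(3) mult_right_mono[OF y_le, of "36 * M * exp (y/4)"] by (simp add: algebra_simps)
  also have "\<dots> \<le> E * E - ln 8"
    using E M ln_le_minus_one[of 8] mult_left_mono[OF E(1), of E] by (simp add: algebra_simps)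
  also have "\<dots> = ln (real n)" using E(2) n by (simp add: ln_mult)
  finally show ?thesis using T m n by (simp del: of_nat_mult add: ln_le_cancel_iff)
qed

lemma geometric_jump_cross_le:
  fixes T m :: nat
  assumes T: "0 < T" and m: "0 < m" "y / \<delta>^2 \<le> m" and kj: "k < j"
    and \<rho>: "0 < \<rho>" "\<rho> \<le> y / 8" and y: "0 < y" and \<delta>: "0 < \<delta>"
  shows "real (min (T * m^(2*k)) (T * m^(2*j))) * (jump_size \<rho> (T * m^(2*k)) * jump_size \<rho> (T * m^(2*j)))
    \<le> \<delta>^2 / 4"
proof -
  have "m^(2*k) * m^2 = m^(2*k + 2)" by (simp add: power_add power2_eq_square)
  also have "\<dots> \<le> m^(2*j)" using kj m by (intro power_increasing) auto
  finally have "T * m^(2*k) * m^2 \<le> T * m^(2*j)" by (simp add: mult.assoc)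
  then have "real (T * m^(2*k)) * (real m)^2 \<le> real (T * m^(2*j))"
    by (metis of_nat_le_iff of_nat_mult of_nat_power)
  then have "real (T * m^(2*k)) * (jump_size \<rho> (T * m^(2*k)) * jump_size \<rho> (T * m^(2*j)))
      \<le> 16/9 * (\<rho> / m)"
    using T m \<rho> by (intro jump_size_cross_le) auto
  also have "\<dots> \<le> 16/9 * ((y / 8) / (y / \<delta>^2))"
    using \<rho> m y \<delta> by (intro mult_left_mono frac_le) auto
  also have "\<dots> = 2/9 * \<delta>^2" using y by simp
  finally have "real (T * m^(2*k)) * (jump_size \<rho> (T * m^(2*k)) * jump_size \<rho> (T * m^(2*j)))
      \<le> 2/9 * \<delta>^2" .
  moreover have "min (T * m^(2*k)) (T * m^(2*j)) = T * m^(2*k)"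
    using kj m by (simp add: power_increasing)
  ultimately show ?thesis using zero_le_power2[of \<delta>] by (simp only:)
qed

lemma geometric_change_points_exist:
  fixes y :: real
  assumes \<delta>: "0 < \<delta>" "\<delta> < 1" and n: "n \<ge> 2" and \<rho>: "\<rho> > 0"
    and y: "y = ln (ln (8 * real n))" and y_large: "2 * ln (144 / \<delta>^4 + 15) \<le> y" and \<rho>_le: "\<rho> \<le> y / 8"
  shows "\<exists>K t. 0 < K \<and> (\<forall>k<K. 1 \<le> t k \<and> 2 * t k \<le> n \<and> 256 * \<rho> \<le> t k) \<and> change_point_chi2 \<rho> K t \<le> \<delta>^2"
proof -
  have y_pos: "y > 0" using \<rho> \<rho>_le by linarith
  define T where "T = nat \<lceil>32 * y\<rceil>"
  define m where "m = nat \<lceil>y / \<delta>^2\<rceil>"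
  define K where "K = nat \<lceil>2 * exp (y/4) / \<delta>^2\<rceil>"
  define t where "t k = T * m^(2*k)" for k
  have T: "32 * y \<le> T" "T \<le> 32 * y + 1" "0 < T"
    using y_pos by (auto simp: T_def of_nat_nat_ceiling_le)
  have m: "y / \<delta>^2 \<le> m" "m \<le> y / \<delta>^2 + 1" "0 < m"
    using y_pos \<delta> by (auto simp: m_def of_nat_nat_ceiling_le)
  have K: "2 * exp (y/4) / \<delta>^2 \<le> K" "K \<le> 2 * exp (y/4) / \<delta>^2 + 1" "0 < K"
    using \<delta> by (auto simp: K_def of_nat_nat_ceiling_le)
  have "0 < 144 / \<delta>^4 + 15" using \<delta> by (intro add_pos_pos divide_pos_pos) auto
  then have "144 / \<delta>^4 + 15 = exp (ln (144 / \<delta>^4 + 15))" by simp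
  also have "\<dots> \<le> exp (y/2)" using y_large by simp
  finally have "144 / \<delta>^4 + 15 \<le> exp (y/2)" .
  moreover have "exp y = ln (8 * real n)" using y n by simp
  ultimately have fit: "2 * (T * m^(2*(K-1))) \<le> n"
    using \<delta> y_pos n T m K by (intro geometric_change_points_fit) auto
  have t_valid: "1 \<le> t k \<and> 2 * t k \<le> n \<and> 256 * \<rho> \<le> t k" if "k < K" for k
  proof -
    have "t k \<le> T * m^(2*(K-1))" unfolding t_def using that m by (intro mult_left_mono power_increasing) auto
    moreover have "T \<le> t k" using m by (simp add: t_def)
    ultimately show ?thesis using fit T \<rho>_le by linarith
  qed
  have cross: "real (min (t k) (t j)) * (jump_size \<rho> (t k) * jump_size \<rho> (t j)) \<le> \<delta>^2 / 4"
    if "k < j" for k j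
    unfolding t_def using T m \<rho> \<rho>_le y_pos \<delta> that by (intro geometric_jump_cross_le[where y=y]) auto
  have "change_point_chi2 \<rho> K t \<le> \<delta>^2"
  proof (rule change_point_chi2_le)
    have "exp (16/9 * \<rho>) \<le> exp (y/4)" using \<rho>_le y_pos by simp
    also have "exp (y/4) \<le> K * \<delta>^2 / 2" using K(1) \<delta> by (simp add: field_simps)
    finally show "exp (16/9 * \<rho>) \<le> K * \<delta>^2 / 2" .
    show "real (min (t k) (t j)) * (jump_size \<rho> (t k) * jump_size \<rho> (t j)) \<le> \<delta>^2 / 4"
      if "k < K" "j < K" "k \<noteq> j" for k j
      using that cross[of k j] cross[of j k] by (cases "k < j") (auto simp: min.commute mult.commute)
  qed (use K \<rho> \<delta> T m in \<open>auto simp: t_def\<close>)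
  then show ?thesis using K t_valid by blast
qed

text \<open>With y = ln (ln (8 n)): for y below 2 ln (144 / \<delta>^4 + 15) the bound \<rho> \<le> c y forces
  \<rho> so small that one alternative suffices; above it, c \<le> 1/8 leaves room for the
  geometric mixture.\<close>
definition lower_bound_constant :: "real \<Rightarrow> real" where
  "lower_bound_constant \<delta> = min (1/8) (min (\<delta>^2/2) (1/256) / (2 * ln (144 / \<delta>^4 + 15)))"

lemma lower_bound_constant_pos: "0 < \<delta> \<Longrightarrow> 0 < lower_bound_constant \<delta>"
  by (simp add: lower_bound_constant_def add_pos_pos)

lemma change_points_exist:
  assumes \<delta>: "0 < \<delta>" "\<delta> < 1" and n: "n \<ge> 2" and \<rho>: "0 < \<rho>"
    and c: "0 < c" "c < lower_bound_constant \<delta>" and \<rho>_le: "\<rho> \<le> c * ln (ln (8 * real n))"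
  shows "\<exists>K t. 0 < K \<and> (\<forall>k<K. 1 \<le> t k \<and> 2 * t k \<le> n \<and> 256 * \<rho> \<le> t k) \<and> change_point_chi2 \<rho> K t \<le> \<delta>^2"
proof -
  define y where "y = ln (ln (8 * real n))"
  define y0 where "y0 = 2 * ln (144 / \<delta>^4 + 15)"
  have y0: "y0 > 0" using \<delta> by (simp add: y0_def add_pos_pos)
  have y: "y > 0"
  proof (rule ccontr)
    assume "\<not> y > 0"
    then have "c * y \<le> 0" using c by (simp add: mult_nonneg_nonpos)
    then show False using \<rho> \<rho>_le by (simp add: y_def)
  qed
  show ?thesis
  proof (cases "y0 \<le> y")
    case True
    have "c * y \<le> 1/8 * y" using c y by (intro mult_right_mono) (auto simp: lower_bound_constant_def)
    then have "\<rho> \<le> y / 8" using \<rho>_le by (simp add: y_def)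
    then show ?thesis using geometric_change_points_exist[OF \<delta> n \<rho> y_def] True by (simp add: y0_def)
  next
    case False
    have "c * y \<le> lower_bound_constant \<delta> * y0" using c y False by (intro mult_mono) auto
    then have "\<rho> \<le> lower_bound_constant \<delta> * y0" using \<rho>_le by (simp add: y_def)
    also have "\<dots> \<le> min (\<delta>^2/2) (1/256)"
    proof -
      have "lower_bound_constant \<delta> \<le> min (\<delta>^2/2) (1/256) / y0"
        by (simp add: lower_bound_constant_def y0_def)
      then show ?thesis using y0 by (simp add: pos_le_divide_eq)
    qed
    finally show ?thesis using single_change_point_exists[OF n \<rho>] by simp
  qed
qed

theorem proposition2:
  shows "\<exists>u0>0. \<forall>\<delta>::real. 0 < \<delta> \<and> \<delta> < 1 \<longrightarrow>
    (\<exists>c\<delta>>0. \<forall>\<sigma> w u c \<rho>::real. \<forall>n::nat.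
       \<sigma> > 0 \<longrightarrow> w \<ge> 1 / sqrt (2 * pi) \<longrightarrow> u \<ge> u0 \<longrightarrow> n \<ge> 2 \<longrightarrow>
       0 < c \<longrightarrow> c < c\<delta> \<longrightarrow> 0 < \<rho> \<longrightarrow> \<rho> \<le> c * ln (ln (8 * real n)) \<longrightarrow>
       minimax_risk \<rho> n \<sigma> w u \<ge> ennreal (1 - \<delta>))"
proof (rule exI[of _ "3 / ln 2"], intro conjI allI impI)
  fix \<delta> :: real assume \<delta>: "0 < \<delta> \<and> \<delta> < 1"
  show "\<exists>c\<delta>>0. \<forall>\<sigma> w u c \<rho>::real. \<forall>n::nat.
       \<sigma> > 0 \<longrightarrow> w \<ge> 1 / sqrt (2 * pi) \<longrightarrow> u \<ge> 3 / ln 2 \<longrightarrow> n \<ge> 2 \<longrightarrow>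
       0 < c \<longrightarrow> c < c\<delta> \<longrightarrow> 0 < \<rho> \<longrightarrow> \<rho> \<le> c * ln (ln (8 * real n)) \<longrightarrow>
       minimax_risk \<rho> n \<sigma> w u \<ge> ennreal (1 - \<delta>)"
  proof (rule exI[of _ "lower_bound_constant \<delta>"], intro conjI allI impI)
    show "0 < lower_bound_constant \<delta>" using \<delta> by (simp add: lower_bound_constant_pos)
    fix \<sigma> w u c \<rho> :: real and n :: nat
    assume \<sigma>: "\<sigma> > 0" and w: "w \<ge> 1 / sqrt (2 * pi)" and u: "u \<ge> 3 / ln 2" and n: "n \<ge> 2"
      and c: "0 < c" "c < lower_bound_constant \<delta>" and \<rho>: "0 < \<rho>" "\<rho> \<le> c * ln (ln (8 * real n))"
    obtain K t where "0 < K" "\<forall>k<K. 1 \<le> t k \<and> 2 * t k \<le> n \<and> 256 * \<rho> \<le> t k" "change_point_chi2 \<rho> K t \<le> \<delta>^2"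
      using change_points_exist[OF _ _ n \<rho>(1) c \<rho>(2)] \<delta> by blast
    then show "minimax_risk \<rho> n \<sigma> w u \<ge> ennreal (1 - \<delta>)"
      using minimax_risk_ge_change_point_mixture[OF \<sigma> w u \<rho>(1)] \<delta> by blast
  qed
qed (simp)

end
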